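(* Let $n\ge 2$. Under optimal play, the Sign Game on the complete graph $K_n$ is won by Player N, with the following exceptions: if Player N is Player 1 and $n=2$, then Player P wins; if Player N is Player 1 and $n=4$, the game is a draw.
   Context: The Sign Game on a finite simple undirected graph $G$: two players, Player P and Player N, alternate turns; the player who moves first is called Player 1 and the other Player 2 (either of P, N may be Player 1). On a turn, a player chooses a vertex of $G$ not yet assigned a value and assigns it $+1$ or $-1$. The game ends when every vertex has been assigned. The score of an edge $uv$ is the product of the values of $u$ and $v$, and the score $s(G)$ of the game is the sum of the scores of all edges. Player P wins if $s(G)>0$, Player N wins if $s(G)<0$, and the game is a draw if $s(G)=0$. "Under optimal play" means both players play optimally, each with primary goal of winning and secondary goal of at least drawing; the result (P wins, N wins, or draw) is the outcome of this finite perfect-information game under such play, i.e. the stated player has a strategy guaranteeing that result (and for a draw, each player can guarantee not losing). $K_n$ is the complete graph on $n$ vertices. *)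

theory Defs
  imports Main
begin

text \<open>A (partial) assignment maps each vertex to
None (not yet assigned) or Some s with s \<in> {1,-1}.\<close>

definition edges :: "'v set \<Rightarrow> ('v \<Rightarrow> 'v \<Rightarrow> bool) \<Rightarrow> 'v set set" where
  "edges V E = {{u, v} | u v. u \<in> V \<and> v \<in> V \<and> E u v}"

definition game_score :: "'v set \<Rightarrow> ('v \<Rightarrow> 'v \<Rightarrow> bool) \<Rightarrow> ('v \<Rightarrow> int option) \<Rightarrow> int" where
  "game_score V E a = (\<Sum>e\<in>edges V E. \<Prod>x\<in>e. the (a x))"

text \<open>Minimax value of the game (outcome: 1 = P wins, 0 = draw, -1 = N wins)
from assignment a, with at most k moves remaining; pturn says that Player P
is to move.  P maximises and N minimises the sign of the final score, which
encodes "primary goal winning, secondary goal at least drawing".\<close>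
fun game_val :: "nat \<Rightarrow> 'v set \<Rightarrow> ('v \<Rightarrow> 'v \<Rightarrow> bool) \<Rightarrow> ('v \<Rightarrow> int option) \<Rightarrow> bool \<Rightarrow> int" where
  "game_val 0 V E a pturn = sgn (game_score V E a)"
| "game_val (Suc k) V E a pturn =
     (let opts = {game_val k V E (a(v := Some s)) (\<not> pturn) | v s. v \<in> V \<and> a v = None \<and> s \<in> {1, -1}}
      in if opts = {} then sgn (game_score V E a)
         else if pturn then Max opts else Min opts)"

text \<open>Outcome of the Sign Game on (V,E) under optimal play; p_first says Player P is Player 1.\<close>
definition sign_game_outcome :: "'v set \<Rightarrow> ('v \<Rightarrow> 'v \<Rightarrow> bool) \<Rightarrow> bool \<Rightarrow> int" where
  "sign_game_outcome V E p_first = game_val (card V) V E (\<lambda>_. None) p_first"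

definition K_vertices :: "nat \<Rightarrow> nat set" where "K_vertices n = {..<n}"
definition K_adj :: "nat \<Rightarrow> nat \<Rightarrow> bool" where "K_adj u v = (u \<noteq> v)"

end

theory Submission
  imports Defs
begin

text \<open>If every vertex of K_n carries a value in {1,-1} and S is the sum of the values,
then twice the score is S^2 - n.  Hence only |S| matters: P wants it large and N small, and a
move just adds 1 or -1 to S.  Optimally P always increases |S| and N decreases it, except that
N is forced up from S = 0.  Starting from S = 0, the final |S| is n mod 2 when P moves first,
and 1 or 2 (for n odd or even) when N moves first; comparing its square with n gives the
outcome.\<close>

lemma finite_edges: "finite V \<Longrightarrow> finite (edges V E)"
  unfolding edges_def by (rule finite_subset[of _ "Pow V"]) auto

lemma edges_K_adj_insert:
  assumes "x \<notin> V"
  shows "edges (insert x V) K_adj = edges V K_adj \<union> (\<lambda>v. {x, v}) ` V"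
  using assms unfolding edges_def K_adj_def by blast

lemma game_score_K_adj:
  assumes "finite V" and "\<forall>v\<in>V. a v \<in> {Some 1, Some (-1)}"
  shows "2 * game_score V K_adj a = (\<Sum>v\<in>V. the (a v))\<^sup>2 - int (card V)"
  using assms
proof (induction V rule: finite_induct)
  case empty
  then show ?case by (simp add: game_score_def edges_def)
next
  case (insert x V)
  have disjoint: "edges V K_adj \<inter> (\<lambda>v. {x, v}) ` V = {}"
    using insert.hyps(2) unfolding edges_def by (auto simp: doubleton_eq_iff)
  have "inj_on (\<lambda>v. {x, v}) V"
    by (rule inj_onI) (auto simp: doubleton_eq_iff)
  then have "game_score (insert x V) K_adj a =
      game_score V K_adj a + (\<Sum>v\<in>V. the (a x) * the (a v))"
    using insert.hyps disjoint finite_edges[of V]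
    by (auto simp: game_score_def edges_K_adj_insert sum.union_disjoint sum.reindex prod.insert_if
        intro!: sum.cong split: if_splits)
  moreover have "the (a x) * the (a x) = 1"
    using insert.prems by auto
  ultimately show ?case
    using insert by (simp add: sum_distrib_left power2_eq_square algebra_simps)
qed

text \<open>The final |S| under optimal play, when the current (signed) sum is t, k moves
remain and pturn says that P is to move.\<close>

fun optimal_abs_sum :: "nat \<Rightarrow> int \<Rightarrow> bool \<Rightarrow> int" where
  "optimal_abs_sum 0 t pturn = \<bar>t\<bar>"
| "optimal_abs_sum (Suc k) t True =
     max (optimal_abs_sum k (t + 1) False) (optimal_abs_sum k (t - 1) False)"
| "optimal_abs_sum (Suc k) t False =
     min (optimal_abs_sum k (t + 1) True) (optimal_abs_sum k (t - 1) True)"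

lemma optimal_abs_sum_closed_form:
  "optimal_abs_sum k t True = \<bar>t\<bar> + of_bool (odd k)"
  "optimal_abs_sum k t False =
     (if t \<noteq> 0 then \<bar>t\<bar> - of_bool (odd k) else if k = 0 then 0 else if odd k then 1 else 2)"
  by (induction k arbitrary: t) auto

lemma optimal_abs_sum_nonneg: "0 \<le> optimal_abs_sum k t pturn"
  by (cases pturn) (auto simp: optimal_abs_sum_closed_form)

lemma sgn_power2_diff_mono:
  fixes x y N :: int
  assumes "0 \<le> x" "x \<le> y"
  shows "sgn (x\<^sup>2 - N) \<le> sgn (y\<^sup>2 - N)"
  using power_mono[OF assms(2,1), of 2] by (auto simp: sgn_if)

lemma max_sgn_power2_diff:
  fixes x y N :: int
  assumes "0 \<le> x" "0 \<le> y"
  shows "max (sgn (x\<^sup>2 - N)) (sgn (y\<^sup>2 - N)) = sgn ((max x y)\<^sup>2 - N)"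
  using assms sgn_power2_diff_mono[of x y N] sgn_power2_diff_mono[of y x N]
  by (auto simp: max_def)

lemma min_sgn_power2_diff:
  fixes x y N :: int
  assumes "0 \<le> x" "0 \<le> y"
  shows "min (sgn (x\<^sup>2 - N)) (sgn (y\<^sup>2 - N)) = sgn ((min x y)\<^sup>2 - N)"
  using assms sgn_power2_diff_mono[of x y N] sgn_power2_diff_mono[of y x N]
  by (auto simp: min_def)

definition assigned_sum :: "'v set \<Rightarrow> ('v \<Rightarrow> int option) \<Rightarrow> int" where
  "assigned_sum V a = (\<Sum>v\<in>V. case a v of None \<Rightarrow> 0 | Some s \<Rightarrow> s)"

lemma assigned_sum_update:
  assumes "finite V" "v \<in> V" "a v = None"
  shows "assigned_sum V (a(v := Some s)) = assigned_sum V a + s"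
proof -
  have "assigned_sum V (a(v := Some s)) =
      s + (\<Sum>w\<in>V - {v}. case a w of None \<Rightarrow> 0 | Some s \<Rightarrow> s)"
    using assms unfolding assigned_sum_def by (simp add: sum.remove[of V v])
  also have "\<dots> = assigned_sum V a + s"
    using assms unfolding assigned_sum_def by (simp add: sum.remove[of V v])
  finally show ?thesis .
qed

lemma game_val_K_adj:
  assumes "finite V" and "\<forall>v\<in>V. a v \<in> {None, Some 1, Some (-1)}"
    and "card {v\<in>V. a v = None} = k"
  shows "game_val k V K_adj a pturn =
    sgn ((optimal_abs_sum k (assigned_sum V a) pturn)\<^sup>2 - int (card V))"
  using assms(2,3)
proof (induction k arbitrary: a pturn)
  case 0
  then have "{v\<in>V. a v = None} = {}"
    using assms(1) by simp
  then have complete: "\<forall>v\<in>V. a v \<in> {Some 1, Some (-1)}"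
    using "0.prems"(1) by blast
  have "assigned_sum V a = (\<Sum>v\<in>V. the (a v))"
    unfolding assigned_sum_def using complete by (intro sum.cong) auto
  have "sgn (game_score V K_adj a) = sgn (2 * game_score V K_adj a)"
    by (simp add: sgn_mult)
  also have "\<dots> = sgn ((assigned_sum V a)\<^sup>2 - int (card V))"
    using game_score_K_adj[OF assms(1) complete] \<open>assigned_sum V a = _\<close> by simp
  finally show ?case by simp
next
  case (Suc k)
  define F where "F t = sgn ((optimal_abs_sum k t (\<not> pturn))\<^sup>2 - int (card V))" for t
  let ?\<sigma> = "assigned_sum V a"
  have move: "game_val k V K_adj (a(v := Some s)) (\<not> pturn) = F (?\<sigma> + s)"
    if "v \<in> V" "a v = None" "s \<in> {1, -1}" for v s
  proof -
    have "{w\<in>V. (a(v := Some s)) w = None} = {w\<in>V. a w = None} - {v}"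
      using that by auto
    then have "card {w\<in>V. (a(v := Some s)) w = None} = k"
      using Suc.prems(2) that by simp
    moreover have "\<forall>w\<in>V. (a(v := Some s)) w \<in> {None, Some 1, Some (-1)}"
      using Suc.prems(1) that(3) by simp
    ultimately show ?thesis
      using Suc.IH[of "a(v := Some s)"] assigned_sum_update[of V v a s, OF assms(1) that(1,2)]
      unfolding F_def by presburger
  qed
  have "{v\<in>V. a v = None} \<noteq> {}"
    using Suc.prems(2) by (metis card.empty nat.distinct(1))
  then obtain v0 where v0: "v0 \<in> V" "a v0 = None"
    by blast
  have options: "{game_val k V K_adj (a(v := Some s)) (\<not> pturn) | v s.
      v \<in> V \<and> a v = None \<and> s \<in> {1, -1}} = {F (?\<sigma> + 1), F (?\<sigma> - 1)}"
    (is "?options = _")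
  proof
    have "F (?\<sigma> + 1) \<in> ?options" "F (?\<sigma> + -1) \<in> ?options"
      using move[OF v0, of 1, symmetric] move[OF v0, of "-1", symmetric] v0 by blast+
    then show "{F (?\<sigma> + 1), F (?\<sigma> - 1)} \<subseteq> ?options"
      by simp
  qed (use move in auto)
  have "game_val (Suc k) V K_adj a pturn =
      (if pturn then max (F (?\<sigma> + 1)) (F (?\<sigma> - 1)) else min (F (?\<sigma> + 1)) (F (?\<sigma> - 1)))"
    unfolding game_val.simps(2) Let_def options by simp
  then show ?case
    using optimal_abs_sum_nonneg
    by (cases pturn) (simp_all add: F_def max_sgn_power2_diff min_sgn_power2_diff)
qed

lemma sign_game_outcome_complete_graph:
  "sign_game_outcome (K_vertices n) K_adj p_first =
    sgn ((optimal_abs_sum n 0 p_first)\<^sup>2 - int n)"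
proof -
  have "assigned_sum {..<n} (\<lambda>_. None) = 0"
    unfolding assigned_sum_def by simp
  then show ?thesis
    using game_val_K_adj[of "{..<n}" "\<lambda>_. None" n p_first]
    unfolding sign_game_outcome_def K_vertices_def by simp
qed

theorem theorem1:
  fixes n :: nat
  assumes "n \<ge> 2"
  shows "sign_game_outcome (K_vertices n) K_adj True = -1 \<and>
         sign_game_outcome (K_vertices n) K_adj False =
           (if n = 2 then 1 else if n = 4 then 0 else -1)"
proof -
  have "odd n \<or> n = 2 \<or> n = 4 \<or> n \<ge> 6 \<and> even n"
    using assms by presburger
  then show ?thesis
    using assms
    by (auto simp: sign_game_outcome_complete_graph optimal_abs_sum_closed_form sgn_if)
qed

end
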